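(* Let $q\ge2$, $n\ge1$, $X=\{0,1,\ldots,q-1\}$, and consider the Insect Markov chain on $X^n$ (defined below). Let $\mathcal{L}=\{L_1,\ldots,L_k\}$ be a partition of $X^n$ with respect to which this chain is lumpable. Let $x_0,y_0\in L_r$ for some $r$, and for $i=0,\ldots,n$ and $s=1,\ldots,k$ put $\lambda_{i,s}=|\{x\in X^n: d(x_0,x)=i,\ x\in L_s\}|$ and $\mu_{i,s}=|\{y\in X^n: d(y_0,y)=i,\ y\in L_s\}|$. Then $\lambda_{i,s}=\mu_{i,s}$ for every $i=0,\ldots,n$ and $s=1,\ldots,k$.
   Context: For $x,y\in X^n$, $d(x,y)=n-\max\{m\in\{0,\ldots,n\}: x_1\cdots x_m=y_1\cdots y_m\}$ (the ultrametric on the boundary of the rooted $q$-ary tree of depth $n$). Set $\alpha_j=\frac{q^j-1}{q^{j+1}-1}$ for $1\le j\le n-1$ and $\alpha_n=0$. The Insect Markov chain on $X^n$ has transition probabilities depending only on $d(x,y)$: if $d(x,y)\in\{0,1\}$, $p(x,y)=q^{-1}(1-\alpha_1)+\sum_{i=2}^nq^{-i}\alpha_1\cdots\alpha_{i-1}(1-\alpha_i)$, and if $d(x,y)=j>1$, $p(x,y)=\sum_{i=j}^nq^{-i}\alpha_1\cdots\alpha_{i-1}(1-\alpha_i)$. A chain is lumpable with respect to a partition if for all parts $L,L'$ the map $x\mapsto\sum_{y\in L'}p(x,y)$ is constant on $L$. *)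

theory Defs
  imports "HOL-Analysis.Analysis" "HOL-Library.Disjoint_Sets"
begin

definition words :: "nat \<Rightarrow> nat \<Rightarrow> nat list set" where
  "words q n = {xs. length xs = n \<and> set xs \<subseteq> {..<q}}"

definition udist :: "nat \<Rightarrow> nat list \<Rightarrow> nat list \<Rightarrow> nat" where
  "udist n x y = n - Max {m. m \<le> n \<and> take m x = take m y}"

definition alpha :: "nat \<Rightarrow> nat \<Rightarrow> nat \<Rightarrow> real" where
  "alpha q n j = (if j = n then 0 else (real q ^ j - 1) / (real q ^ (j + 1) - 1))"

definition insect_term :: "nat \<Rightarrow> nat \<Rightarrow> nat \<Rightarrow> real" where
  "insect_term q n i = (1 / real q ^ i) * (\<Prod>l\<in>{1..<i}. alpha q n l) * (1 - alpha q n i)"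

definition insect_p :: "nat \<Rightarrow> nat \<Rightarrow> nat list \<Rightarrow> nat list \<Rightarrow> real" where
  "insect_p q n x y =
     (let j = udist n x y in
      if j \<le> 1 then (1 / real q) * (1 - alpha q n 1) + (\<Sum>i=2..n. insect_term q n i)
      else (\<Sum>i=j..n. insect_term q n i))"

definition lumpable :: "nat \<Rightarrow> nat \<Rightarrow> nat list set set \<Rightarrow> bool" where
  "lumpable q n P \<longleftrightarrow>
     (\<forall>L\<in>P. \<forall>L'\<in>P. \<forall>x\<in>L. \<forall>x'\<in>L.
        (\<Sum>y\<in>L'. insect_p q n x y) = (\<Sum>y\<in>L'. insect_p q n x' y))"

end

theory Submission
  imports Defs
begin

text \<open>
  Lumpable kernels (those \<open>K\<close> for which \<open>x \<mapsto> \<Sum>y\<in>L'. K x y\<close> is constant on every block)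
  form an algebra under linear combinations and the kernel product, containing the identity.
  Let \<open>E j\<close> be the indicator of \<open>d(x,y) \<le> j\<close>; counting common prefixes gives
  \<open>E i * E j = q^min i j * E (max i j)\<close>, so the radial kernels \<open>\<Sum>j. b j * E j\<close> form a
  subalgebra. The Insect kernel plus the identity is radial with all coefficients positive.
  If a radial \<open>K\<close> has coefficients vanishing below \<open>k\<close> and positive on \<open>[k, n]\<close>, then
  \<open>K^2 - b k * q^k * K\<close> has the same property for \<open>k + 1\<close>; subtracting the higher \<open>E j\<close>
  (lumpable by downward induction) from such a kernel isolates \<open>E k\<close>. Hence every sphere
  indicator \<open>E i - E (i - 1)\<close> is lumpable, and its sums over a block \<open>L\<^sub>s\<close> from \<open>x\<^sub>0\<close> and
  from \<open>y\<^sub>0\<close> are \<open>\<lambda>\<^sub>i\<^sub>s\<close> and \<open>\<mu>\<^sub>i\<^sub>s\<close>.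
\<close>

section \<open>Lumpable kernels\<close>

definition lumpable_kernel :: "'a set set \<Rightarrow> ('a \<Rightarrow> 'a \<Rightarrow> real) \<Rightarrow> bool" where
  "lumpable_kernel P K \<longleftrightarrow>
     (\<forall>L\<in>P. \<forall>L'\<in>P. \<forall>x\<in>L. \<forall>x'\<in>L. (\<Sum>y\<in>L'. K x y) = (\<Sum>y\<in>L'. K x' y))"

definition kernel_mult :: "'a set \<Rightarrow> ('a \<Rightarrow> 'a \<Rightarrow> real) \<Rightarrow> ('a \<Rightarrow> 'a \<Rightarrow> real) \<Rightarrow> 'a \<Rightarrow> 'a \<Rightarrow> real"
  where "kernel_mult W K M x y = (\<Sum>z\<in>W. K x z * M z y)"

lemma finite_partition_on_block:
  assumes "partition_on W P" "finite W" "L \<in> P"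
  shows "finite L"
  using assms partition_onD1[OF assms(1)] by (metis Union_upper finite_subset)

lemma sum_partition_on:
  assumes "partition_on W P" "finite W"
  shows "sum h W = (\<Sum>L\<in>P. sum h L)"
  using sum.Union_disjoint_sets[of P h] finite_partition_on_block[OF assms]
    partition_onD1[OF assms(1)] partition_onD2[OF assms(1)] by simp

lemma lumpable_kernel_lincomb:
  assumes "lumpable_kernel P K" "lumpable_kernel P M"
  shows "lumpable_kernel P (\<lambda>x y. a * K x y + b * M x y)"
  unfolding lumpable_kernel_def
proof (intro ballI)
  fix L L' x x' assume blocks: "L \<in> P" "L' \<in> P" "x \<in> L" "x' \<in> L"
  have split: "(\<Sum>y\<in>L'. a * K u y + b * M u y) = a * (\<Sum>y\<in>L'. K u y) + b * (\<Sum>y\<in>L'. M u y)" for u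
    by (simp add: sum.distrib sum_distrib_left)
  from assms blocks show "(\<Sum>y\<in>L'. a * K x y + b * M x y) = (\<Sum>y\<in>L'. a * K x' y + b * M x' y)"
    unfolding split lumpable_kernel_def by metis
qed

lemma lumpable_kernel_sum:
  assumes "finite I" "\<And>i. i \<in> I \<Longrightarrow> lumpable_kernel P (K i)"
  shows "lumpable_kernel P (\<lambda>x y. \<Sum>i\<in>I. c i * K i x y)"
  using assms
proof (induction I rule: finite_induct)
  case empty
  then show ?case by (simp add: lumpable_kernel_def)
next
  case (insert a F)
  then have "lumpable_kernel P (\<lambda>x y. 1 * (\<Sum>i\<in>F. c i * K i x y) + c a * K a x y)"
    by (intro lumpable_kernel_lincomb) auto
  with insert show ?case by (simp add: add.commute)
qed

lemma lumpable_kernel_cong: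
  assumes "lumpable_kernel P K" "partition_on W P"
    and "\<And>x y. x \<in> W \<Longrightarrow> y \<in> W \<Longrightarrow> K x y = M x y"
  shows "lumpable_kernel P M"
  unfolding lumpable_kernel_def
proof (intro ballI)
  fix L L' x x' assume blocks: "L \<in> P" "L' \<in> P" "x \<in> L" "x' \<in> L"
  have sub: "L \<subseteq> W" "L' \<subseteq> W" using blocks partition_onD1[OF assms(2)] by auto
  have "\<And>u. u \<in> L \<Longrightarrow> (\<Sum>y\<in>L'. M u y) = (\<Sum>y\<in>L'. K u y)"
    by (intro sum.cong refl assms(3)[symmetric]) (use sub in auto)
  with blocks assms(1) show "(\<Sum>y\<in>L'. M x y) = (\<Sum>y\<in>L'. M x' y)"
    unfolding lumpable_kernel_def by metis
qed

lemma lumpable_kernel_id: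
  assumes "partition_on W P" "finite W"
  shows "lumpable_kernel P (\<lambda>x y. if x = y then 1 else 0)"
  unfolding lumpable_kernel_def
proof (intro ballI)
  fix L L' x x' assume blocks: "L \<in> P" "L' \<in> P" "x \<in> L" "x' \<in> L"
  have "x \<in> L' \<longleftrightarrow> x' \<in> L'"
    using blocks partition_onD2[OF assms(1)] by (metis disjointD disjoint_iff)
  with finite_partition_on_block[OF assms blocks(2)]
  show "(\<Sum>y\<in>L'. if x = y then 1 else 0 :: real) = (\<Sum>y\<in>L'. if x' = y then 1 else 0)"
    by simp
qed

lemma lumpable_kernel_mult:
  assumes part: "partition_on W P" and "finite W"
    and K: "lumpable_kernel P K" and M: "lumpable_kernel P M"
  shows "lumpable_kernel P (kernel_mult W K M)"
  unfolding lumpable_kernel_def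
proof (intro ballI)
  fix L L' x x' assume blocks: "L \<in> P" "L' \<in> P" "x \<in> L" "x' \<in> L"
  define g where "g z = (\<Sum>y\<in>L'. M z y)" for z
  have by_blocks: "(\<Sum>y\<in>L'. kernel_mult W K M u y) = (\<Sum>A\<in>P. \<Sum>z\<in>A. K u z * g z)" for u
  proof -
    have "(\<Sum>y\<in>L'. kernel_mult W K M u y) = (\<Sum>z\<in>W. K u z * g z)"
      unfolding kernel_mult_def g_def by (simp add: sum_distrib_left sum.swap[of _ L'])
    then show ?thesis by (simp add: sum_partition_on[OF assms(1,2)])
  qed
  have "(\<Sum>z\<in>A. K x z * g z) = (\<Sum>z\<in>A. K x' z * g z)" if A: "A \<in> P" for A
  proof -
    obtain z0 where z0: "z0 \<in> A" using partition_onD3[OF part] A by (metis all_not_in_conv)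
    have g_const: "\<And>z. z \<in> A \<Longrightarrow> g z = g z0"
      using M A blocks(2) z0 unfolding lumpable_kernel_def g_def by blast
    have "(\<Sum>z\<in>A. K x z * g z) = (\<Sum>z\<in>A. K x z) * g z0"
      by (simp add: sum_distrib_right g_const)
    also have "\<dots> = (\<Sum>z\<in>A. K x' z) * g z0"
      using K blocks A unfolding lumpable_kernel_def by metis
    also have "\<dots> = (\<Sum>z\<in>A. K x' z * g z)"
      by (simp add: sum_distrib_right g_const)
    finally show ?thesis .
  qed
  then show "(\<Sum>y\<in>L'. kernel_mult W K M x y) = (\<Sum>y\<in>L'. kernel_mult W K M x' y)"
    unfolding by_blocks by (simp cong: sum.cong)
qed

section \<open>Radial kernels on the q-ary tree\<close>

lemma finite_words: "finite (words q n)"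
  using finite_lists_length_eq[of "{..<q}" n] by (simp add: words_def conj_commute)

lemma card_words: "card (words q n) = q ^ n"
  using card_lists_length_eq[of "{..<q}" n] by (simp add: words_def conj_commute)

lemma card_words_prefix:
  assumes x: "x \<in> words q n" and "a \<le> n"
  shows "card {z \<in> words q n. take a z = take a x} = q ^ (n - a)"
proof -
  have "{z \<in> words q n. take a z = take a x} = (\<lambda>w. take a x @ w) ` words q (n - a)"
  proof (intro equalityI subsetI)
    fix z assume z: "z \<in> {z \<in> words q n. take a z = take a x}"
    then have "z = take a x @ drop a z" by (metis (mono_tags) append_take_drop_id mem_Collect_eq)
    moreover have "drop a z \<in> words q (n - a)"
      using z set_drop_subset[of a z] by (auto simp: words_def)
    ultimately show "z \<in> (\<lambda>w. take a x @ w) ` words q (n - a)" by blast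
  next
    fix z assume "z \<in> (\<lambda>w. take a x @ w) ` words q (n - a)"
    moreover have "set (take a x) \<subseteq> {..<q}"
      using x set_take_subset[of a x] by (auto simp: words_def)
    ultimately show "z \<in> {z \<in> words q n. take a z = take a x}"
      using x \<open>a \<le> n\<close> by (auto simp: words_def)
  qed
  moreover have "inj_on (\<lambda>w. take a x @ w) (words q (n - a))" by (rule inj_onI) simp
  ultimately show ?thesis by (simp add: card_image card_words)
qed

lemma udist_le_iff: "udist n x y \<le> j \<longleftrightarrow> take (n - j) x = take (n - j) y"
proof -
  define S where "S = {m. m \<le> n \<and> take m x = take m y}"
  have fin: "finite S" unfolding S_def by auto
  have ne: "S \<noteq> {}" unfolding S_def by (metis (mono_tags, lifting) empty_iff le0 mem_Collect_eq take_0)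
  have "udist n x y \<le> j \<longleftrightarrow> n - j \<le> Max S" unfolding udist_def S_def by linarith
  also have "\<dots> \<longleftrightarrow> (\<exists>m\<in>S. n - j \<le> m)" using Max_ge_iff[OF fin ne] by simp
  also have "\<dots> \<longleftrightarrow> take (n - j) x = take (n - j) y"
  proof
    assume "\<exists>m\<in>S. n - j \<le> m"
    then obtain m where "m \<in> S" "n - j \<le> m" by blast
    then show "take (n - j) x = take (n - j) y" unfolding S_def
      by (metis (mono_tags, lifting) mem_Collect_eq min.absorb1 take_take)
  next
    assume "take (n - j) x = take (n - j) y"
    then show "\<exists>m\<in>S. n - j \<le> m" unfolding S_def by (intro bexI[of _ "n - j"]) auto
  qed
  finally show ?thesis .
qed

definition ball_kernel :: "nat \<Rightarrow> nat \<Rightarrow> nat list \<Rightarrow> nat list \<Rightarrow> real" where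
  "ball_kernel n j x y = (if udist n x y \<le> j then 1 else 0)"

definition radial_kernel :: "nat \<Rightarrow> (nat \<Rightarrow> real) \<Rightarrow> nat list \<Rightarrow> nat list \<Rightarrow> real" where
  "radial_kernel n b x y = (\<Sum>j\<le>n. b j * ball_kernel n j x y)"

definition radial_coeff_mult :: "nat \<Rightarrow> (nat \<Rightarrow> real) \<Rightarrow> (nat \<Rightarrow> real) \<Rightarrow> nat \<Rightarrow> real" where
  "radial_coeff_mult q b c m = b m * (\<Sum>j\<le>m. c j * real q ^ j) + c m * (\<Sum>i<m. b i * real q ^ i)"

lemma ball_kernel_mult:
  assumes x: "x \<in> words q n" and y: "y \<in> words q n" and "i \<le> n" "j \<le> n"
  shows "kernel_mult (words q n) (ball_kernel n i) (ball_kernel n j) x y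
         = real q ^ min i j * ball_kernel n (max i j) x y"
proof -
  let ?W = "words q n"
  have take_mono: "a' \<le> a \<Longrightarrow> take a u = take a v \<Longrightarrow> take a' u = take a' v" for a a' :: nat and u v :: "'b list"
    by (metis min.absorb1 take_take)
  have "kernel_mult ?W (ball_kernel n i) (ball_kernel n j) x y
        = (\<Sum>z\<in>?W. if take (n-i) x = take (n-i) z \<and> take (n-j) z = take (n-j) y then 1 else 0)"
    unfolding kernel_mult_def ball_kernel_def udist_le_iff by (intro sum.cong) auto
  also have "\<dots> = real (card {z \<in> ?W. take (n-i) x = take (n-i) z \<and> take (n-j) z = take (n-j) y})"
    using finite_words by (simp add: sum.If_cases Int_def)
  also have "\<dots> = real q ^ min i j * ball_kernel n (max i j) x y"
  proof (cases "i \<le> j")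
    case True
    then have "{z \<in> ?W. take (n-i) x = take (n-i) z \<and> take (n-j) z = take (n-j) y} =
        (if take (n-j) x = take (n-j) y then {z \<in> ?W. take (n-i) z = take (n-i) x} else {})"
      by auto (metis diff_le_mono2 take_mono)+
    with True show ?thesis
      using card_words_prefix[OF x, of "n-i"] \<open>i \<le> n\<close>
      by (simp add: ball_kernel_def udist_le_iff max_def min_def)
  next
    case False
    then have "{z \<in> ?W. take (n-i) x = take (n-i) z \<and> take (n-j) z = take (n-j) y} =
        (if take (n-i) x = take (n-i) y then {z \<in> ?W. take (n-j) z = take (n-j) y} else {})"
      by auto (metis diff_le_mono2 nat_le_linear take_mono)+
    with False show ?thesis
      using card_words_prefix[OF y, of "n-j"] \<open>j \<le> n\<close>
      by (simp add: ball_kernel_def udist_le_iff max_def min_def)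
  qed
  finally show ?thesis .
qed

lemma sum_square_min_max:
  fixes b c Q e :: "nat \<Rightarrow> 'a::comm_ring"
  shows "(\<Sum>i\<le>n. \<Sum>j\<le>n. b i * c j * (Q (min i j) * e (max i j))) =
         (\<Sum>m\<le>n. (b m * (\<Sum>j\<le>m. c j * Q j) + c m * (\<Sum>i<m. b i * Q i)) * e m)"
proof (induction n)
  case 0
  then show ?case by (simp add: algebra_simps)
next
  case (Suc n)
  have "(\<Sum>i\<le>Suc n. \<Sum>j\<le>Suc n. b i * c j * (Q (min i j) * e (max i j))) =
    (\<Sum>i\<le>n. \<Sum>j\<le>Suc n. b i * c j * (Q (min i j) * e (max i j)))
    + (\<Sum>j\<le>Suc n. b (Suc n) * c j * (Q j * e (Suc n)))"
    by (simp add: max_def min_def)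
  also have "(\<Sum>i\<le>n. \<Sum>j\<le>Suc n. b i * c j * (Q (min i j) * e (max i j)))
     = (\<Sum>i\<le>n. \<Sum>j\<le>n. b i * c j * (Q (min i j) * e (max i j)))
       + (\<Sum>i\<le>n. b i * c (Suc n) * (Q i * e (Suc n)))"
    by (simp add: sum.distrib min_absorb1 max_absorb2)
  finally show ?case unfolding Suc.IH
    by (simp add: algebra_simps sum_distrib_left sum_distrib_right lessThan_Suc_atMost)
qed

lemma radial_kernel_mult:
  assumes "x \<in> words q n" "y \<in> words q n"
  shows "kernel_mult (words q n) (radial_kernel n b) (radial_kernel n c) x y
         = radial_kernel n (radial_coeff_mult q b c) x y"
proof -
  let ?W = "words q n"
  have "kernel_mult ?W (radial_kernel n b) (radial_kernel n c) x y
      = (\<Sum>i\<le>n. \<Sum>j\<le>n. b i * c j * kernel_mult ?W (ball_kernel n i) (ball_kernel n j) x y)"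
    unfolding kernel_mult_def radial_kernel_def sum_product
    by (simp add: sum_distrib_left algebra_simps sum.swap[of _ ?W])
  also have "\<dots> = (\<Sum>i\<le>n. \<Sum>j\<le>n. b i * c j * (real q ^ min i j * ball_kernel n (max i j) x y))"
    using assms by (simp add: ball_kernel_mult)
  also have "\<dots> = radial_kernel n (radial_coeff_mult q b c) x y"
    unfolding sum_square_min_max[where Q="\<lambda>k. real q ^ k" and e="\<lambda>k. ball_kernel n k x y"]
      radial_kernel_def radial_coeff_mult_def ..
  finally show ?thesis .
qed

lemma radial_kernel_lincomb:
  "radial_kernel n (\<lambda>j. a * b j + c * d j) x y = a * radial_kernel n b x y + c * radial_kernel n d x y"
  unfolding radial_kernel_def sum_distrib_left sum.distrib[symmetric]
  by (intro sum.cong) (simp_all add: algebra_simps)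

lemma radial_kernel_udist: "radial_kernel n b x y = (\<Sum>j = udist n x y..n. b j)"
proof -
  have "radial_kernel n b x y = (\<Sum>j\<in>{..n}. if udist n x y \<le> j then b j else 0)"
    unfolding radial_kernel_def ball_kernel_def by (intro sum.cong) auto
  also have "\<dots> = (\<Sum>j\<in>{j \<in> {..n}. udist n x y \<le> j}. b j)"
    by (rule sum.inter_filter[symmetric]) simp
  also have "{j \<in> {..n}. udist n x y \<le> j} = {udist n x y..n}" by auto
  finally show ?thesis .
qed

lemma lumpable_radial_kernel_mult:
  assumes "partition_on (words q n) P"
    and "lumpable_kernel P (radial_kernel n b)" "lumpable_kernel P (radial_kernel n c)"
  shows "lumpable_kernel P (radial_kernel n (radial_coeff_mult q b c))"
  using lumpable_kernel_mult[OF assms(1) finite_words assms(2,3)] assms(1)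
  by (rule lumpable_kernel_cong) (simp add: radial_kernel_mult)

section \<open>The Insect kernel\<close>

definition insect_coeff :: "nat \<Rightarrow> nat \<Rightarrow> nat \<Rightarrow> real" where
  "insect_coeff q n j =
     (if j = 0 then 0 else if j = 1 then (1 / real q) * (1 - alpha q n 1) else insect_term q n j)"

lemma alpha_bounds:
  assumes q: "q \<ge> 2" and l: "1 \<le> l" "l < n"
  shows "0 < alpha q n l" "alpha q n l < 1"
proof -
  have q1: "real q \<ge> 2" using q by simp
  have "real q ^ l \<ge> real q ^ 1" using q1 l by (intro power_increasing) auto
  then have A: "real q ^ l - 1 > 0" using q1 by (simp only: power_one_right)
  have "real q ^ (l + 1) = real q * real q ^ l" by simp
  also have "\<dots> > real q ^ l" using q1 A by (simp add: mult_less_cancel_right1)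
  finally have B: "real q ^ (l + 1) - 1 > real q ^ l - 1" by simp
  have an: "alpha q n l = (real q ^ l - 1) / (real q ^ (l + 1) - 1)" using l by (simp add: alpha_def)
  show "0 < alpha q n l" unfolding an using A B by simp
  show "alpha q n l < 1" unfolding an using A B by simp
qed

lemma one_minus_alpha_pos:
  assumes "q \<ge> 2" "1 \<le> l" "l \<le> n"
  shows "0 < 1 - alpha q n l"
  using alpha_bounds[OF assms(1,2)] assms(3) by (cases "l = n") (auto simp: alpha_def)

lemma insect_coeff_pos:
  assumes q: "q \<ge> 2" and j: "1 \<le> j" "j \<le> n"
  shows "0 < insect_coeff q n j"
proof -
  have "0 < (\<Prod>l\<in>{1..<j}. alpha q n l)"
    by (rule prod_pos) (use alpha_bounds[OF q] j in auto)
  moreover have "0 < 1 / real q ^ j" using q by simp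
  ultimately have "0 < insect_term q n j"
    unfolding insect_term_def using one_minus_alpha_pos[OF q j] by simp
  then show ?thesis
    using one_minus_alpha_pos[OF q order.refl, of n] j q unfolding insect_coeff_def by auto
qed

text \<open>The cases \<open>d(x,y) \<in> {0,1}\<close> of \<open>insect_p\<close> merge because \<open>insect_coeff q n 0 = 0\<close>.\<close>
lemma insect_p_eq_radial_kernel:
  assumes "n \<ge> 1"
  shows "insect_p q n x y = radial_kernel n (insect_coeff q n) x y"
proof -
  define d where "d = udist n x y"
  have tail: "(\<Sum>i=m..n. insect_coeff q n i) = (\<Sum>i=m..n. insect_term q n i)" if "m \<ge> 2" for m
    using that by (intro sum.cong refl) (auto simp: insect_coeff_def)
  have head: "(\<Sum>i=m..n. insect_coeff q n i)
      = (1 / real q) * (1 - alpha q n 1) + (\<Sum>i=2..n. insect_coeff q n i)" if "m \<le> 1" for m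
  proof -
    have "{m..n} = (if m = 0 then {0} else {}) \<union> insert 1 {2..n}" using that assms by auto
    then show ?thesis by (simp add: insect_coeff_def)
  qed
  show ?thesis
    unfolding insect_p_def Let_def radial_kernel_udist d_def[symmetric]
    using head[of d] tail[of d] tail[of 2] by simp
qed

lemma lumpable_insect_plus_id:
  assumes "n \<ge> 1" "partition_on (words q n) P" "lumpable q n P"
  shows "lumpable_kernel P (radial_kernel n (\<lambda>j. of_bool (j = 0) + insect_coeff q n j))"
proof -
  have sum: "lumpable_kernel P (\<lambda>x y. 1 * (if x = y then 1 else 0) + 1 * insect_p q n x y)"
    using lumpable_kernel_id[OF assms(2) finite_words] assms(3)
    unfolding lumpable_def lumpable_kernel_def[symmetric] by (rule lumpable_kernel_lincomb)
  have id: "radial_kernel n (\<lambda>j. of_bool (j = 0)) x y = (if x = y then 1 else 0)"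
    if "x \<in> words q n" "y \<in> words q n" for x y
    using that by (simp add: radial_kernel_def ball_kernel_def udist_le_iff words_def)
  have split: "radial_kernel n (\<lambda>j. of_bool (j = 0) + insect_coeff q n j) x y
      = radial_kernel n (\<lambda>j. of_bool (j = 0)) x y + radial_kernel n (insect_coeff q n) x y" for x y
    using radial_kernel_lincomb[of n 1 "\<lambda>j. of_bool (j = 0)" 1] by simp
  show ?thesis
    by (rule lumpable_kernel_cong[OF sum assms(2)])
      (simp add: split id insect_p_eq_radial_kernel[OF assms(1)])
qed

section \<open>Isolating the ball kernels\<close>

lemma radial_coeff_square_shift:
  fixes b :: "nat \<Rightarrow> real"
  assumes q: "q \<ge> 1" and vanish: "\<forall>i<k. b i = 0" and pos: "\<forall>i. k \<le> i \<and> i \<le> n \<longrightarrow> 0 < b i"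
  shows "j \<le> k \<Longrightarrow> radial_coeff_mult q b b j - b k * real q ^ k * b j = 0"
    and "k < j \<Longrightarrow> j \<le> n \<Longrightarrow> 0 < radial_coeff_mult q b b j - b k * real q ^ k * b j"
proof -
  have low: "(\<Sum>i<k. b i * real q ^ i) = 0" using vanish by simp
  assume "j \<le> k"
  then consider "j < k" | "j = k" by linarith
  then show "radial_coeff_mult q b b j - b k * real q ^ k * b j = 0"
    by cases (use vanish low in \<open>simp_all add: radial_coeff_mult_def lessThan_Suc_atMost[symmetric]\<close>)
next
  assume j: "k < j" "j \<le> n"
  define S where "S = (\<Sum>i<j. b i * real q ^ i)"
  have nonneg: "\<And>i. i \<le> n \<Longrightarrow> 0 \<le> b i" using vanish pos by (metis le_less linorder_not_le)
  have "b k * real q ^ k \<le> S"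
    unfolding S_def by (rule member_le_sum) (use j nonneg q in auto)
  moreover have "0 \<le> S" unfolding S_def by (rule sum_nonneg) (use j nonneg in auto)
  moreover have "0 < b j * real q ^ j" using pos j q by simp
  moreover have "radial_coeff_mult q b b j - b k * real q ^ k * b j
      = b j * ((S - b k * real q ^ k) + b j * real q ^ j + S)"
    unfolding radial_coeff_mult_def S_def by (simp add: lessThan_Suc_atMost[symmetric] algebra_simps)
  ultimately show "0 < radial_coeff_mult q b b j - b k * real q ^ k * b j"
    using pos j by (simp add: add_pos_nonneg)
qed

lemma lumpable_radial_kernel_supported_from:
  assumes part: "partition_on (words q n) P" and q: "q \<ge> 1"
    and pos0: "\<forall>j\<le>n. 0 < b0 j" and lump0: "lumpable_kernel P (radial_kernel n b0)"
    and "k \<le> n"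
  shows "\<exists>b. (\<forall>j<k. b j = 0) \<and> (\<forall>j. k \<le> j \<and> j \<le> n \<longrightarrow> 0 < b j)
             \<and> lumpable_kernel P (radial_kernel n b)"
  using \<open>k \<le> n\<close>
proof (induction k)
  case 0
  then show ?case using pos0 lump0 by auto
next
  case (Suc k)
  then obtain b where vanish: "\<forall>j<k. b j = 0" and pos: "\<forall>j. k \<le> j \<and> j \<le> n \<longrightarrow> 0 < b j"
    and lump: "lumpable_kernel P (radial_kernel n b)" by auto
  define b' where "b' = (\<lambda>j. 1 * radial_coeff_mult q b b j + (- (b k * real q ^ k)) * b j)"
  have "lumpable_kernel P (radial_kernel n b')"
    unfolding b'_def radial_kernel_lincomb
    by (rule lumpable_kernel_lincomb[OF lumpable_radial_kernel_mult[OF part lump lump] lump])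
  moreover note radial_coeff_square_shift[OF q vanish pos]
  ultimately show ?case by (intro exI[of _ b']) (auto simp: b'_def less_Suc_eq_le Suc_le_eq)
qed

lemma lumpable_ball_kernel:
  assumes part: "partition_on (words q n) P" and q: "q \<ge> 1"
    and pos0: "\<forall>j\<le>n. 0 < b0 j" and lump0: "lumpable_kernel P (radial_kernel n b0)"
    and "k \<le> n"
  shows "lumpable_kernel P (ball_kernel n k)"
  using \<open>k \<le> n\<close>
proof (induction "n - k" arbitrary: k rule: less_induct)
  case less
  obtain b where vanish: "\<forall>j<k. b j = 0" and pos: "\<forall>j. k \<le> j \<and> j \<le> n \<longrightarrow> 0 < b j"
    and lump: "lumpable_kernel P (radial_kernel n b)"
    using lumpable_radial_kernel_supported_from[OF part q pos0 lump0 less.prems] by blast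
  define R where "R = (\<lambda>x y. \<Sum>j\<in>{k<..n}. b j * ball_kernel n j x y)"
  have lumpR: "lumpable_kernel P R"
    unfolding R_def using less.hyps by (intro lumpable_kernel_sum) auto
  have split: "radial_kernel n b x y = b k * ball_kernel n k x y + R x y" for x y
  proof -
    have "radial_kernel n b x y = (\<Sum>j\<in>insert k {k<..n}. b j * ball_kernel n j x y)"
      unfolding radial_kernel_def using vanish less.prems
      by (intro sum.mono_neutral_right) (auto simp: not_less)
    then show ?thesis unfolding R_def by simp
  qed
  have "b k > 0" using pos less.prems by simp
  then have ball: "ball_kernel n k = (\<lambda>x y. (1 / b k) * radial_kernel n b x y + (- (1 / b k)) * R x y)"
    by (intro ext) (simp add: split field_simps)
  show ?case unfolding ball by (rule lumpable_kernel_lincomb[OF lump lumpR])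
qed

lemma lumpable_sphere_kernel:
  assumes "\<forall>k\<le>n. lumpable_kernel P (ball_kernel n k)" and "i \<le> n"
  shows "lumpable_kernel P (\<lambda>x y. of_bool (udist n x y = i))"
proof (cases "i = 0")
  case True
  then have "(\<lambda>x y. of_bool (udist n x y = i)) = ball_kernel n 0"
    by (intro ext) (simp add: ball_kernel_def)
  then show ?thesis using assms by simp
next
  case False
  then have sphere: "(\<lambda>x y. of_bool (udist n x y = i)) =
      (\<lambda>x y. 1 * ball_kernel n i x y + (-1) * ball_kernel n (i - 1) x y)"
    by (intro ext) (auto simp: ball_kernel_def)
  show ?thesis unfolding sphere by (rule lumpable_kernel_lincomb) (use assms in auto)
qed

lemma card_sphere_block:
  assumes "L \<subseteq> words q n"
  shows "real (card {x \<in> words q n. udist n z x = i \<and> x \<in> L}) = (\<Sum>y\<in>L. of_bool (udist n z y = i))"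
proof -
  have "(\<Sum>y\<in>L. of_bool (udist n z y = i)) = real (card (L \<inter> {y. udist n z y = i}))"
    by (intro sum_of_bool_eq finite_subset[OF assms finite_words])
  also have "L \<inter> {y. udist n z y = i} = {x \<in> words q n. udist n z x = i \<and> x \<in> L}"
    using assms by auto
  finally show ?thesis by (rule sym)
qed

theorem theorem12:
  fixes q n :: nat and P :: "nat list set set" and Lr :: "nat list set"
    and x0 y0 :: "nat list"
  assumes "q \<ge> 2" and "n \<ge> 1"
    and "partition_on (words q n) P"
    and "lumpable q n P"
    and "Lr \<in> P" and "x0 \<in> Lr" and "y0 \<in> Lr"
  shows "\<forall>i\<le>n. \<forall>Ls\<in>P.
           card {x \<in> words q n. udist n x0 x = i \<and> x \<in> Ls}
         = card {y \<in> words q n. udist n y0 y = i \<and> y \<in> Ls}"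
proof (intro allI impI ballI)
  fix i Ls assume i: "i \<le> n" and Ls: "Ls \<in> P"
  have pos: "\<forall>j\<le>n. 0 < of_bool (j = 0) + insect_coeff q n j"
    using insect_coeff_pos[OF assms(1)] by (auto simp: insect_coeff_def)
  have "\<forall>k\<le>n. lumpable_kernel P (ball_kernel n k)"
    using lumpable_ball_kernel[OF assms(3) _ pos lumpable_insect_plus_id[OF assms(2-4)]] assms(1)
    by simp
  then have "lumpable_kernel P (\<lambda>x y. of_bool (udist n x y = i))"
    using i by (rule lumpable_sphere_kernel)
  then have "(\<Sum>y\<in>Ls. of_bool (udist n x0 y = i)) = (\<Sum>y\<in>Ls. of_bool (udist n y0 y = i) :: real)"
    using assms(5-7) Ls unfolding lumpable_kernel_def by blast
  moreover have "Ls \<subseteq> words q n" using partition_onD1[OF assms(3)] Ls by blast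
  ultimately have "real (card {x \<in> words q n. udist n x0 x = i \<and> x \<in> Ls})
      = real (card {y \<in> words q n. udist n y0 y = i \<and> y \<in> Ls})"
    by (simp only: card_sphere_block)
  then show "card {x \<in> words q n. udist n x0 x = i \<and> x \<in> Ls}
      = card {y \<in> words q n. udist n y0 y = i \<and> y \<in> Ls}"
    by (simp only: of_nat_eq_iff)
qed

end
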